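(* For every even $N\ge 2$, the matrix-valued function $F_{2,N}(z)$ (and hence $F_{1,N}(z)=I-F_{2,N}(z)$) has no pole at $z=1$, i.e. it extends analytically to $z=1$.
   Context: Fix $0<\alpha,\beta<1$. For $\varepsilon\in(0,1)$: $\phi_{\varepsilon,1}(z)=\begin{pmatrix}1&\varepsilon^2z^{-1}\\ \varepsilon^{-2}&1\end{pmatrix}$, $\phi_{\varepsilon,2}(z)=\frac{1}{1-z^{-1}}\phi_{\varepsilon,1}(z)$, $\phi_3(z)=\begin{pmatrix}1&z^{-1}\\1&1\end{pmatrix}$, $\phi_4(z)=\frac{1}{1-z^{-1}}\phi_3(z)$, $\Phi_\varepsilon=\phi_{\varepsilon,1}\phi_{\varepsilon,2}\phi_3\phi_4$. Let $\phi_N(z)=\Phi_\alpha(z)^{N/2}\Phi_\beta(z)^{N/2}$, $t_N=\operatorname{tr}\phi_N$; in a punctured neighborhood of $1$ the eigenvalues are $r_{1,N}=\frac12(t_N+\sqrt{t_N^2-4})$, $r_{2,N}=\frac12(t_N-\sqrt{t_N^2-4})$ with $\sqrt{t^2-4}=t(1-4/t^2)^{1/2}$ (principal branch), and $F_{1,N}(z),F_{2,N}(z)$ are the corresponding spectral projections ($\phi_N=r_{1,N}F_{1,N}+r_{2,N}F_{2,N}$, $F_{1,N}+F_{2,N}=I$, $F_{k,N}^2=F_{k,N}$, $F_{1,N}F_{2,N}=0$). *)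

theory Defs
  imports "HOL-Analysis.Analysis"
begin

text \<open>2x2 complex matrices are rendered as complex^2^2; rows/columns indexed by (1::2), (2::2).\<close>

definition mat2 :: "complex \<Rightarrow> complex \<Rightarrow> complex \<Rightarrow> complex \<Rightarrow> complex^2^2" where
  "mat2 a b c d = (\<chi> i j. if i = 1 then (if j = 1 then a else b) else (if j = 1 then c else d))"

definition msmult :: "complex \<Rightarrow> complex^2^2 \<Rightarrow> complex^2^2" where
  "msmult c A = (\<chi> i j. c * A $ i $ j)"

fun mpow :: "complex^2^2 \<Rightarrow> nat \<Rightarrow> complex^2^2" where
  "mpow A 0 = mat 1"
| "mpow A (Suc n) = A ** mpow A n"

definition phi1 :: "real \<Rightarrow> complex \<Rightarrow> complex^2^2" where
  "phi1 \<epsilon> z = mat2 1 (of_real \<epsilon> ^ 2 * inverse z) (inverse (of_real \<epsilon> ^ 2)) 1"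

definition phi2 :: "real \<Rightarrow> complex \<Rightarrow> complex^2^2" where
  "phi2 \<epsilon> z = msmult (1 / (1 - inverse z)) (phi1 \<epsilon> z)"

definition phi3 :: "complex \<Rightarrow> complex^2^2" where
  "phi3 z = mat2 1 (inverse z) 1 1"

definition phi4 :: "complex \<Rightarrow> complex^2^2" where
  "phi4 z = msmult (1 / (1 - inverse z)) (phi3 z)"

definition Phi :: "real \<Rightarrow> complex \<Rightarrow> complex^2^2" where
  "Phi \<epsilon> z = phi1 \<epsilon> z ** phi2 \<epsilon> z ** phi3 z ** phi4 z"

definition phiN :: "real \<Rightarrow> real \<Rightarrow> nat \<Rightarrow> complex \<Rightarrow> complex^2^2" where
  "phiN \<alpha> \<beta> N z = mpow (Phi \<alpha> z) (N div 2) ** mpow (Phi \<beta> z) (N div 2)"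

definition tN :: "real \<Rightarrow> real \<Rightarrow> nat \<Rightarrow> complex \<Rightarrow> complex" where
  "tN \<alpha> \<beta> N z = trace (phiN \<alpha> \<beta> N z)"

text \<open>sqrt(t^2-4) := t * (1 - 4/t^2)^(1/2), principal branch (csqrt)\<close>
definition sq4 :: "complex \<Rightarrow> complex" where
  "sq4 t = t * csqrt (1 - 4 / t ^ 2)"

definition r1N :: "real \<Rightarrow> real \<Rightarrow> nat \<Rightarrow> complex \<Rightarrow> complex" where
  "r1N \<alpha> \<beta> N z = (tN \<alpha> \<beta> N z + sq4 (tN \<alpha> \<beta> N z)) / 2"

definition r2N :: "real \<Rightarrow> real \<Rightarrow> nat \<Rightarrow> complex \<Rightarrow> complex" where
  "r2N \<alpha> \<beta> N z = (tN \<alpha> \<beta> N z - sq4 (tN \<alpha> \<beta> N z)) / 2"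

end

theory Submission
  imports Defs
begin

text \<open>Pulling the scalar factors 1/(1 - 1/z) out of \<open>\<phi>\<^sub>2\<close> and \<open>\<phi>\<^sub>4\<close> gives
  \<open>\<phi>\<^sub>N(z) = h(z) M(z)\<close> with \<open>h(z) = (1 - 1/z)\<^sup>-\<^sup>k\<close>, \<open>k = 2N\<close>, and \<open>M\<close> analytic at 1.
  At \<open>z = 1\<close> every factor of \<open>M\<close> is a rank-one matrix with positive real column sums,
  so \<open>T = tr M\<close> does not vanish there. Since \<open>F\<^sub>1 = (\<phi>\<^sub>N - r\<^sub>2 I)/(r\<^sub>1 - r\<^sub>2)\<close> and the
  eigenvalues are \<open>(t \<plusminus> \<surd>(t\<^sup>2-4))/2\<close> with \<open>t = h T\<close>, the pole \<open>h\<close> cancels: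
  \<open>F\<^sub>1 = (M - T(1 - c)/2 I)/(T c)\<close> with \<open>c = (1 - 4/(hT)\<^sup>2)\<^sup>1\<^sup>/\<^sup>2\<close>, and \<open>c \<rightarrow> 1\<close> analytically
  as \<open>z \<rightarrow> 1\<close> because \<open>1/h(1) = 0\<close>.\<close>

lemma mat2_mult:
  "mat2 a b c d ** mat2 a' b' c' d' = mat2 (a*a'+b*c') (a*b'+b*d') (c*a'+d*c') (c*b'+d*d')"
  unfolding mat2_def matrix_matrix_mult_def by (simp add: vec_eq_iff sum_2 forall_2)

lemma trace_mat2: "trace (mat2 a b c d) = a + d"
  unfolding mat2_def trace_def by (simp add: sum_2)

lemma msmult_component [simp]: "msmult c A $ i $ j = c * A $ i $ j"
  by (simp add: msmult_def)

lemma msmult_one: "msmult 1 A = A"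
  by (simp add: vec_eq_iff)

lemma msmult_msmult: "msmult c (msmult d A) = msmult (c * d) A"
  by (simp add: vec_eq_iff mult.assoc)

lemma msmult_matrix_mult_left: "msmult c A ** B = msmult c (A ** B)"
  unfolding matrix_matrix_mult_def by (simp add: vec_eq_iff sum_distrib_left mult.assoc)

lemma msmult_matrix_mult_right: "A ** msmult c B = msmult c (A ** B)"
  unfolding matrix_matrix_mult_def by (simp add: vec_eq_iff sum_distrib_left ac_simps)

lemmas msmult_matrix_mult = msmult_matrix_mult_left msmult_matrix_mult_right

lemma trace_msmult: "trace (msmult c A) = c * trace A"
  unfolding trace_def by (simp add: sum_distrib_left)

lemma mpow_msmult: "mpow (msmult c A) n = msmult (c ^ n) (mpow A n)"
  by (induction n) (simp_all add: msmult_one msmult_matrix_mult msmult_msmult mult.commute)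

lemma mpow_mat2_rank_one:
  "mpow (mat2 x x y y) (Suc n) = msmult ((x + y) ^ n) (mat2 x x y y)"
proof (induction n)
  case 0
  then show ?case by (simp add: msmult_one mat2_mult[symmetric] matrix_mul_rid)
next
  case (Suc n)
  have square: "mat2 x x y y ** mat2 x x y y = msmult (x + y) (mat2 x x y y)"
    unfolding mat2_mult by (simp add: mat2_def vec_eq_iff forall_2 algebra_simps)
  have "mpow (mat2 x x y y) (Suc (Suc n)) = msmult ((x + y) ^ n) (mat2 x x y y ** mat2 x x y y)"
    using Suc by (simp only: mpow.simps msmult_matrix_mult_right)
  then show ?case by (simp add: square msmult_msmult mult.commute)
qed

definition Phi_reg :: "real \<Rightarrow> complex \<Rightarrow> complex^2^2" where
  "Phi_reg \<epsilon> z = phi1 \<epsilon> z ** phi1 \<epsilon> z ** phi3 z ** phi3 z"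

definition phiN_reg :: "real \<Rightarrow> real \<Rightarrow> nat \<Rightarrow> complex \<Rightarrow> complex^2^2" where
  "phiN_reg \<alpha> \<beta> N z = mpow (Phi_reg \<alpha> z) (N div 2) ** mpow (Phi_reg \<beta> z) (N div 2)"

lemma Phi_eq_msmult_Phi_reg: "Phi \<epsilon> z = msmult ((1 / (1 - inverse z))\<^sup>2) (Phi_reg \<epsilon> z)"
  unfolding Phi_def phi2_def phi4_def Phi_reg_def
  by (simp add: msmult_matrix_mult msmult_msmult power2_eq_square)

lemma phiN_eq_msmult_phiN_reg:
  "phiN \<alpha> \<beta> N z = msmult (inverse ((1 - inverse z) ^ (4 * (N div 2)))) (phiN_reg \<alpha> \<beta> N z)"
  unfolding phiN_def phiN_reg_def Phi_eq_msmult_Phi_reg mpow_msmult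
  by (simp add: msmult_matrix_mult msmult_msmult power_mult[symmetric] power_add[symmetric]
      mult_2[symmetric] power_one_over inverse_eq_divide)

lemma Phi_reg_at_1:
  assumes "\<epsilon> \<noteq> 0"
  shows "Phi_reg \<epsilon> 1 = mat2 (of_real (4 + 4 * \<epsilon>\<^sup>2)) (of_real (4 + 4 * \<epsilon>\<^sup>2))
                               (of_real (4 + 4 / \<epsilon>\<^sup>2)) (of_real (4 + 4 / \<epsilon>\<^sup>2))"
  unfolding Phi_reg_def phi1_def phi3_def mat2_mult
  using assms by (simp add: mat2_def vec_eq_iff forall_2 field_simps eval_nat_numeral)

lemma trace_mpow_mat2_rank_one_mult:
  "trace (mpow (mat2 x x y y) (Suc n) ** mpow (mat2 u u v v) (Suc n)) = ((x + y) * (u + v)) ^ Suc n"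
proof -
  have "trace (mpow (mat2 x x y y) (Suc n) ** mpow (mat2 u u v v) (Suc n))
          = (x + y) ^ n * (u + v) ^ n * ((x + y) * (u + v))"
    unfolding mpow_mat2_rank_one msmult_matrix_mult msmult_msmult trace_msmult mat2_mult trace_mat2
    by (simp add: algebra_simps)
  then show ?thesis by (simp add: power_mult_distrib)
qed

lemma trace_phiN_reg_at_1_nonzero:
  assumes "\<alpha> \<noteq> 0" "\<beta> \<noteq> 0"
  shows "trace (phiN_reg \<alpha> \<beta> N 1) \<noteq> 0"
proof (cases "N div 2")
  case 0
  then show ?thesis by (simp add: phiN_reg_def matrix_mul_lid) (simp add: trace_def mat_def sum_2)
next
  case (Suc n)
  define s where "s \<epsilon> = (4 + 4 * \<epsilon>\<^sup>2) + (4 + 4 / \<epsilon>\<^sup>2)" for \<epsilon> :: real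
  have "s \<epsilon> > 0" for \<epsilon>
    unfolding s_def by (simp add: add_pos_nonneg)
  moreover have "trace (phiN_reg \<alpha> \<beta> N 1) = of_real ((s \<alpha> * s \<beta>) ^ Suc n)"
    unfolding phiN_reg_def Suc Phi_reg_at_1[OF assms(1)] Phi_reg_at_1[OF assms(2)]
      trace_mpow_mat2_rank_one_mult s_def
    by simp
  ultimately show ?thesis
    by (metis mult_pos_pos of_real_eq_0_iff zero_less_power less_irrefl)
qed

definition mat_analytic_at :: "(complex \<Rightarrow> complex^'n^'m) \<Rightarrow> complex \<Rightarrow> bool" where
  "mat_analytic_at A z\<^sub>0 \<longleftrightarrow> (\<forall>i j. (\<lambda>z. A z $ i $ j) analytic_on {z\<^sub>0})"

lemma mat_analytic_at_const: "mat_analytic_at (\<lambda>z. A) z\<^sub>0"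
  unfolding mat_analytic_at_def by simp

lemma mat_analytic_at_mult:
  "mat_analytic_at A z\<^sub>0 \<Longrightarrow> mat_analytic_at B z\<^sub>0 \<Longrightarrow> mat_analytic_at (\<lambda>z. A z ** B z) z\<^sub>0"
  unfolding mat_analytic_at_def matrix_matrix_mult_def
  by (auto intro!: analytic_on_sum analytic_on_mult)

lemma mat_analytic_at_mpow: "mat_analytic_at A z\<^sub>0 \<Longrightarrow> mat_analytic_at (\<lambda>z. mpow (A z) n) z\<^sub>0"
  by (induction n) (simp_all add: mat_analytic_at_const mat_analytic_at_mult)

lemma mat_analytic_at_mat2:
  assumes "a analytic_on {z\<^sub>0}" "b analytic_on {z\<^sub>0}" "c analytic_on {z\<^sub>0}" "d analytic_on {z\<^sub>0}"
  shows "mat_analytic_at (\<lambda>z. mat2 (a z) (b z) (c z) (d z)) z\<^sub>0"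
  unfolding mat_analytic_at_def mat2_def
proof (intro allI)
  fix i j :: 2
  show "(\<lambda>z. (\<chi> i j. if i = 1 then if j = 1 then a z else b z else if j = 1 then c z else d z) $ i $ j)
          analytic_on {z\<^sub>0}"
    using assms by (cases "i = 1"; cases "j = 1") simp_all
qed

lemma mat_analytic_at_phiN_reg:
  assumes "z\<^sub>0 \<noteq> 0"
  shows "mat_analytic_at (phiN_reg \<alpha> \<beta> N) z\<^sub>0"
proof -
  have inverse_analytic: "(\<lambda>z. inverse z) analytic_on {z\<^sub>0}"
    using assms by (intro analytic_on_inverse) auto
  have "mat_analytic_at (phi1 \<epsilon>) z\<^sub>0" for \<epsilon>
    unfolding phi1_def by (intro mat_analytic_at_mat2) (auto intro!: analytic_on_mult inverse_analytic)
  moreover have "mat_analytic_at phi3 z\<^sub>0"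
    unfolding phi3_def by (intro mat_analytic_at_mat2) (auto intro!: inverse_analytic)
  ultimately have "mat_analytic_at (Phi_reg \<epsilon>) z\<^sub>0" for \<epsilon>
    unfolding Phi_reg_def by (intro mat_analytic_at_mult)
  then show ?thesis
    unfolding phiN_reg_def by (intro mat_analytic_at_mult mat_analytic_at_mpow)
qed

lemma analytic_on_trace:
  "mat_analytic_at A z\<^sub>0 \<Longrightarrow> (\<lambda>z. trace (A z)) analytic_on {z\<^sub>0}"
  unfolding mat_analytic_at_def trace_def by (intro analytic_on_sum) auto

definition proj_formula :: "complex^2^2 \<Rightarrow> complex \<Rightarrow> complex^2^2" where
  "proj_formula A s = msmult (inverse s) (A - msmult ((trace A - s) / 2) (mat 1))"

lemma spectral_projection_eq_proj_formula:
  assumes "A = msmult ((trace A + s) / 2) F1 + msmult ((trace A - s) / 2) F2"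
    and "F1 + F2 = mat 1" and "s \<noteq> 0"
  shows "F1 = proj_formula A s"
proof -
  have "A - msmult ((trace A - s) / 2) (mat 1) = msmult s F1"
    by (subst (1) assms(1), subst assms(2)[symmetric]) (simp add: vec_eq_iff field_simps)
  then show ?thesis
    using assms(3) by (simp add: proj_formula_def msmult_msmult msmult_one)
qed

lemma proj_formula_msmult:
  assumes "h \<noteq> 0"
  shows "proj_formula (msmult h A) (h * s) = proj_formula A s"
  using assms by (cases "s = 0") (simp_all add: proj_formula_def trace_msmult vec_eq_iff field_simps)

lemma sq4_mult: "sq4 (h * t) = h * (t * csqrt (1 - 4 * (inverse h)\<^sup>2 / t\<^sup>2))"
  unfolding sq4_def by (simp add: field_simps power_mult_distrib power_inverse)

lemma mat_analytic_at_proj_formula: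
  assumes "mat_analytic_at A z\<^sub>0" "s analytic_on {z\<^sub>0}" "s z\<^sub>0 \<noteq> 0"
  shows "mat_analytic_at (\<lambda>z. proj_formula (A z) (s z)) z\<^sub>0"
  using assms analytic_on_trace[OF assms(1)] unfolding mat_analytic_at_def proj_formula_def
  by (auto intro!: analytic_on_mult analytic_on_inverse analytic_on_diff analytic_on_divide)

text \<open>\<open>eigengap_reg\<close> is \<open>r\<^sub>1 - r\<^sub>2 = \<surd>(t\<^sup>2-4)\<close> with the pole factor \<open>(1 - 1/z)\<^sup>-\<^sup>k\<close> of \<open>\<phi>\<^sub>N\<close> removed.\<close>

definition eigengap_reg :: "real \<Rightarrow> real \<Rightarrow> nat \<Rightarrow> complex \<Rightarrow> complex" where
  "eigengap_reg \<alpha> \<beta> N z = trace (phiN_reg \<alpha> \<beta> N z)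
     * csqrt (1 - 4 * ((1 - inverse z) ^ (4 * (N div 2)))\<^sup>2 / (trace (phiN_reg \<alpha> \<beta> N z))\<^sup>2)"

lemma sq4_tN_eq_eigengap_reg:
  "sq4 (tN \<alpha> \<beta> N z) = inverse ((1 - inverse z) ^ (4 * (N div 2))) * eigengap_reg \<alpha> \<beta> N z"
  unfolding tN_def phiN_eq_msmult_phiN_reg trace_msmult sq4_mult eigengap_reg_def by simp

lemma eigengap_reg_analytic_at_1:
  assumes "\<alpha> \<noteq> 0" "\<beta> \<noteq> 0" "N \<ge> 2"
  shows "eigengap_reg \<alpha> \<beta> N analytic_on {1}" and "eigengap_reg \<alpha> \<beta> N 1 \<noteq> 0"
proof -
  define g where "g z = (1 - inverse z) ^ (4 * (N div 2))" for z :: complex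
  define T where "T z = trace (phiN_reg \<alpha> \<beta> N z)" for z
  have T_1: "T 1 \<noteq> 0"
    unfolding T_def using assms(1,2) by (rule trace_phiN_reg_at_1_nonzero)
  have g_1: "g 1 = 0"
    unfolding g_def using assms(3) by simp
  have "g analytic_on {1}"
    unfolding g_def
    by (intro analytic_on_power analytic_on_diff analytic_on_const analytic_on_inverse analytic_on_ident)
      auto
  moreover have "T analytic_on {1}"
    unfolding T_def by (simp add: analytic_on_trace mat_analytic_at_phiN_reg)
  ultimately show "eigengap_reg \<alpha> \<beta> N analytic_on {1}"
    unfolding eigengap_reg_def g_def[symmetric] T_def[symmetric] using T_1 g_1
    by (auto intro!: analytic_on_mult analytic_on_csqrt' analytic_on_divide analytic_on_power
        analytic_on_diff)
  show "eigengap_reg \<alpha> \<beta> N 1 \<noteq> 0"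
    unfolding eigengap_reg_def g_def[symmetric] T_def[symmetric] using T_1 g_1 by simp
qed

lemma spectral_projection_phiN_eq_proj_formula:
  assumes "z \<noteq> 0" "z \<noteq> 1" "eigengap_reg \<alpha> \<beta> N z \<noteq> 0"
    and "phiN \<alpha> \<beta> N z = msmult (r1N \<alpha> \<beta> N z) F1 + msmult (r2N \<alpha> \<beta> N z) F2"
    and "F1 + F2 = mat 1"
  shows "F1 = proj_formula (phiN_reg \<alpha> \<beta> N z) (eigengap_reg \<alpha> \<beta> N z)"
proof -
  define h where "h = inverse ((1 - inverse z) ^ (4 * (N div 2)))"
  have "h \<noteq> 0"
    unfolding h_def using assms(1,2) by (auto simp: right_minus_eq)
  have "sq4 (tN \<alpha> \<beta> N z) \<noteq> 0"
    using \<open>h \<noteq> 0\<close> assms(3) by (simp add: sq4_tN_eq_eigengap_reg h_def[symmetric])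
  then have "F1 = proj_formula (phiN \<alpha> \<beta> N z) (sq4 (tN \<alpha> \<beta> N z))"
    using assms(4,5) unfolding r1N_def r2N_def tN_def by (intro spectral_projection_eq_proj_formula)
  also have "\<dots> = proj_formula (msmult h (phiN_reg \<alpha> \<beta> N z)) (h * eigengap_reg \<alpha> \<beta> N z)"
    unfolding phiN_eq_msmult_phiN_reg sq4_tN_eq_eigengap_reg h_def ..
  finally show ?thesis
    using \<open>h \<noteq> 0\<close> by (simp add: proj_formula_msmult)
qed

theorem lemma3p5:
  fixes \<alpha> \<beta> :: real and N :: nat and F1 F2 :: "complex \<Rightarrow> complex^2^2"
  assumes "0 < \<alpha>" "\<alpha> < 1" "0 < \<beta>" "\<beta> < 1"
    and "even N" "N \<ge> 2"
    and spectral: "eventually (\<lambda>z.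
        phiN \<alpha> \<beta> N z = msmult (r1N \<alpha> \<beta> N z) (F1 z) + msmult (r2N \<alpha> \<beta> N z) (F2 z)
      \<and> F1 z + F2 z = mat 1
      \<and> F1 z ** F1 z = F1 z \<and> F2 z ** F2 z = F2 z
      \<and> F1 z ** F2 z = 0) (at 1)"
  shows "\<exists>G1 G2 :: complex \<Rightarrow> complex^2^2.
           (\<forall>i j. (\<lambda>z. G1 z $ i $ j) analytic_on {1} \<and> (\<lambda>z. G2 z $ i $ j) analytic_on {1})
         \<and> eventually (\<lambda>z. F1 z = G1 z \<and> F2 z = G2 z) (at 1)"
proof -
  define G1 where "G1 z = proj_formula (phiN_reg \<alpha> \<beta> N z) (eigengap_reg \<alpha> \<beta> N z)" for z
  have nz: "\<alpha> \<noteq> 0" "\<beta> \<noteq> 0" using assms(1,3) by auto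
  have G1_analytic: "mat_analytic_at G1 1"
    unfolding G1_def using eigengap_reg_analytic_at_1[OF nz assms(6)]
    by (intro mat_analytic_at_proj_formula mat_analytic_at_phiN_reg) auto
  have "mat_analytic_at (\<lambda>z. mat 1 - G1 z) 1"
    using G1_analytic unfolding mat_analytic_at_def by (auto intro!: analytic_on_diff)
  moreover have "eventually (\<lambda>z. z \<noteq> 0 \<and> z \<noteq> 1 \<and> eigengap_reg \<alpha> \<beta> N z \<noteq> 0) (at 1)"
    using eigengap_reg_analytic_at_1[OF nz assms(6)] analytic_at_neq_imp_eventually_neq
    by (auto simp: eventually_conj_iff eventually_at_filter eventually_neq_at_within)
  with spectral have "eventually (\<lambda>z. F1 z = G1 z \<and> F2 z = mat 1 - G1 z) (at 1)"
    unfolding G1_def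
    by eventually_elim (metis spectral_projection_phiN_eq_proj_formula add_diff_cancel_left')
  ultimately show ?thesis
    using G1_analytic unfolding mat_analytic_at_def
    by (intro exI[of _ G1] exI[of _ "\<lambda>z. mat 1 - G1 z"]) simp
qed

end
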